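(* For $\phi_1,\phi_2\in D=\{z\in\mathbb{C};|z|<1\}$ with $\phi_1\ne-\phi_2$, define $$s(\phi_1,\phi_2)=\frac{|1-\phi_1\overline{\phi_2}|^2}{(1-|\phi_1\overline{\phi_2}|^2)^3}\rho^{-2}(1-\rho)^{-3/2}\operatorname{Im}(\phi_1\overline{\phi_2})(|\phi_1|^2-|\phi_2|^2)(1-|\phi_1|^2)(1-|\phi_2|^2),$$ with $\rho=|(1-|\phi_2|^2)\phi_1+(1-|\phi_1|^2)\phi_2|/(1-|\phi_1\overline{\phi_2}|^2)$; this is the skewness of the distribution on the unit circle $\partial D$ with density (w.r.t. arc length) $$f(z)=\frac{1}{2\pi}\frac{|1-\phi_1\overline{\phi_2}|^2}{1-|\phi_1\overline{\phi_2}|^2}\frac{1-|\phi_1|^2}{|z-\phi_1|^2}\frac{1-|\phi_2|^2}{|z-\phi_2|^2}.$$ Then, whenever the quantities involved are defined: (1) $s(\phi_1,\phi_2)=0$ if and only if the density $f$ is symmetric; (2) $s(\phi_1,\phi_2)>0$ ($<0$) if and only if $\operatorname{Im}(\phi_1\overline{\phi_2})(|\phi_1|-|\phi_2|)>0$ ($<0$); (3) for $\phi_1,\phi_2\ne0$, $s(\phi_1,\phi_2)=-s(\phi_1,\overline{\phi_2}\phi_1^2/|\phi_1|^2)=-s(\overline{\phi_1}\phi_2^2/|\phi_2|^2,\phi_2)$; (4) $s(\phi_2,\phi_1)=s(\phi_1,\phi_2)$; (5) $s(\overline{\phi_1},\overline{\phi_2})=-s(\phi_1,\phi_2)$; (6)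 $s(\alpha\phi_1,\alpha\phi_2)=s(\phi_1,\phi_2)$ for all $\alpha\in\partial D$; (7) if $\rho_1,\rho_2>0$ and $\sin(\mu_1-\mu_2)>0$ ($<0$), then $\lim_{\rho_1\to1}s(\rho_1\mathrm{e}^{\mathrm{i}\mu_1},\rho_2\mathrm{e}^{\mathrm{i}\mu_2})=\infty$ ($-\infty$).
   Context: For a random variable $Z$ on the unit circle with $E(Z)\neq0$, the skewness is $E[\operatorname{Im}\{(Z\mathrm{e}^{-\mathrm{i}\zeta})^2\}]/(1-\delta)^{3/2}$ with $\zeta=\arg E(Z)$ and $\delta=|E(Z)|$. *)

theory Defs
  imports Complex_Main
begin

definition unit_disc :: "complex set" where
  "unit_disc = {z. cmod z < 1}"

text \<open>The quantity rho (mean resultant length of the distribution).\<close>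
definition rho_p :: "complex \<Rightarrow> complex \<Rightarrow> real" where
  "rho_p p1 p2 =
     cmod (complex_of_real (1 - (cmod p2)\<^sup>2) * p1 + complex_of_real (1 - (cmod p1)\<^sup>2) * p2)
     / (1 - (cmod (p1 * cnj p2))\<^sup>2)"

definition skew :: "complex \<Rightarrow> complex \<Rightarrow> real" where
  "skew p1 p2 =
     (cmod (1 - p1 * cnj p2))\<^sup>2 / (1 - (cmod (p1 * cnj p2))\<^sup>2) ^ 3
     * (1 / (rho_p p1 p2)\<^sup>2) * (1 - rho_p p1 p2) powr (-3/2)
     * Im (p1 * cnj p2) * ((cmod p1)\<^sup>2 - (cmod p2)\<^sup>2)
     * (1 - (cmod p1)\<^sup>2) * (1 - (cmod p2)\<^sup>2)"

definition dens :: "complex \<Rightarrow> complex \<Rightarrow> complex \<Rightarrow> real" where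
  "dens p1 p2 z =
     1 / (2 * pi) * (cmod (1 - p1 * cnj p2))\<^sup>2 / (1 - (cmod (p1 * cnj p2))\<^sup>2)
     * (1 - (cmod p1)\<^sup>2) / (cmod (z - p1))\<^sup>2
     * (1 - (cmod p2)\<^sup>2) / (cmod (z - p2))\<^sup>2"

definition symmetric_circ :: "(complex \<Rightarrow> real) \<Rightarrow> bool" where
  "symmetric_circ f \<longleftrightarrow> (\<exists>\<zeta>::real. \<forall>t::real. f (cis (\<zeta> + t)) = f (cis (\<zeta> - t)))"

end

theory Submission
  imports Defs
begin

text \<open>
  The skewness factors as s = K * Im (p1 * cnj p2) * (|p1|^2 - |p2|^2), where the weight K is
  positive on admissible pairs and depends on p1, p2 only through |p1|, |p2| and
  Re (p1 * cnj p2). The sign statements and all symmetry relations follow from this.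

  Rotating the circle by z, the density is symmetric about the axis at angle z iff
  |e^(it) - w1|^2 * |e^(it) - w2|^2 is even in t, with w1, w2 the rotated poles. Its odd part
  vanishes iff (1 + |w1|^2) Im w2 + (1 + |w2|^2) Im w1 = 0 and Im (w1 * w2) = 0; inside the disc
  these equations force Im (w1 * cnj w2) (|w1|^2 - |w2|^2) = 0, and conversely this condition
  permits a rotation after which w1, w2 are both real or complex conjugate.

  For the limit, 1 - rho = O(1 - |p1|), so the factor (1 - |p1|^2) (1 - rho)^(-3/2) of K grows
  like (1 - |p1|)^(-1/2), while the remaining factors stay bounded away from zero.
\<close>

definition skew_weight :: "complex \<Rightarrow> complex \<Rightarrow> real" where
  "skew_weight p1 p2 =
     (cmod (1 - p1 * cnj p2))\<^sup>2 / (1 - (cmod (p1 * cnj p2))\<^sup>2) ^ 3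
     * (1 / (rho_p p1 p2)\<^sup>2) * (1 - rho_p p1 p2) powr (-3/2)
     * (1 - (cmod p1)\<^sup>2) * (1 - (cmod p2)\<^sup>2)"

lemma skew_eq_weight:
  "skew p1 p2 = skew_weight p1 p2 * (Im (p1 * cnj p2) * ((cmod p1)\<^sup>2 - (cmod p2)\<^sup>2))"
  unfolding skew_def skew_weight_def by (simp only: ac_simps)

lemma norm_of_real_combination_square:
  "(cmod (of_real s * p + of_real t * q))\<^sup>2
     = s\<^sup>2 * (cmod p)\<^sup>2 + t\<^sup>2 * (cmod q)\<^sup>2 + 2 * s * t * Re (p * cnj q)"
  unfolding cmod_power2 by (simp add: power2_eq_square algebra_simps)

lemma norm_one_minus_square: "(cmod (1 - w))\<^sup>2 = 1 - 2 * Re w + (cmod w)\<^sup>2"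
  unfolding cmod_power2 by (simp add: power2_eq_square algebra_simps)

lemma rho_p_cong:
  assumes "cmod q1 = cmod p1" "cmod q2 = cmod p2" "Re (q1 * cnj q2) = Re (p1 * cnj p2)"
  shows "rho_p q1 q2 = rho_p p1 p2"
proof -
  let ?N = "\<lambda>p1 p2. cmod (of_real (1 - (cmod p2)\<^sup>2) * p1 + of_real (1 - (cmod p1)\<^sup>2) * p2)"
  have "(?N q1 q2)\<^sup>2 = (?N p1 p2)\<^sup>2"
    unfolding norm_of_real_combination_square assms ..
  then have "?N q1 q2 = ?N p1 p2"
    by (simp add: power2_eq_iff_nonneg)
  then show ?thesis
    unfolding rho_p_def by (simp add: norm_mult assms)
qed

lemma skew_weight_cong:
  assumes "cmod q1 = cmod p1" "cmod q2 = cmod p2" "Re (q1 * cnj q2) = Re (p1 * cnj p2)"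
  shows "skew_weight q1 q2 = skew_weight p1 p2"
  unfolding skew_weight_def norm_one_minus_square rho_p_cong[OF assms] assms(3)
  by (simp add: norm_mult assms(1,2))

lemma skew_weight_commute: "skew_weight p2 p1 = skew_weight p1 p2"
proof -
  have "rho_p p2 p1 = rho_p p1 p2"
    unfolding rho_p_def by (simp add: norm_mult add.commute mult.commute)
  then show ?thesis
    unfolding skew_weight_def norm_one_minus_square by (simp add: norm_mult mult.commute)
qed

lemma skew_commute: "skew p2 p1 = skew p1 p2"
  unfolding skew_eq_weight skew_weight_commute[of p2] by (simp add: algebra_simps)

lemma skew_cong:
  assumes "cmod q1 = cmod p1" "cmod q2 = cmod p2" "q1 * cnj q2 = p1 * cnj p2"
  shows "skew q1 q2 = skew p1 p2"
  unfolding skew_eq_weight skew_weight_cong[OF assms(1,2) arg_cong[OF assms(3)]] assms ..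

lemma skew_cong_cnj:
  assumes "cmod q1 = cmod p1" "cmod q2 = cmod p2" "q1 * cnj q2 = cnj (p1 * cnj p2)"
  shows "skew q1 q2 = - skew p1 p2"
proof -
  have "Re (q1 * cnj q2) = Re (p1 * cnj p2)"
    using assms(3) by simp
  then have "skew_weight q1 q2 = skew_weight p1 p2"
    by (rule skew_weight_cong[OF assms(1,2)])
  moreover have "Im (q1 * cnj q2) = - Im (p1 * cnj p2)"
    using assms(3) by simp
  ultimately show ?thesis
    unfolding skew_eq_weight assms(1,2) by (simp only: mult_minus_left mult_minus_right)
qed

lemma skew_cnj: "skew (cnj p1) (cnj p2) = - skew p1 p2"
  by (rule skew_cong_cnj) simp_all

lemma skew_rotate:
  assumes "cmod \<alpha> = 1"
  shows "skew (\<alpha> * p1) (\<alpha> * p2) = skew p1 p2"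
proof (rule skew_cong)
  have "\<alpha> * cnj \<alpha> = 1"
    using assms complex_norm_square[of \<alpha>] by simp
  then show "\<alpha> * p1 * cnj (\<alpha> * p2) = p1 * cnj p2"
    by (simp add: algebra_simps)
qed (simp_all add: norm_mult assms)

lemma skew_reflect:
  assumes "p1 \<noteq> 0"
  shows "skew p1 (cnj p2 * p1\<^sup>2 / of_real ((cmod p1)\<^sup>2)) = - skew p1 p2"
proof (rule skew_cong_cnj)
  have sq: "of_real ((cmod p1)\<^sup>2) = p1 * cnj p1"
    by (rule complex_norm_square)
  show "cmod (cnj p2 * p1\<^sup>2 / of_real ((cmod p1)\<^sup>2)) = cmod p2"
    using assms by (simp add: norm_mult norm_divide norm_power)
  show "p1 * cnj (cnj p2 * p1\<^sup>2 / of_real ((cmod p1)\<^sup>2)) = cnj (p1 * cnj p2)"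
    using assms unfolding sq by (simp add: field_simps power2_eq_square)
qed simp

lemma norm_mult_cnj_less_one:
  assumes "p1 \<in> unit_disc" "p2 \<in> unit_disc"
  shows "cmod (p1 * cnj p2) < 1"
proof -
  have "cmod p1 < 1" "cmod p2 < 1"
    using assms unfolding unit_disc_def by auto
  then show ?thesis
    using mult_left_le[of "cmod p2" "cmod p1"] by (simp add: norm_mult)
qed

lemma rho_p_less_one:
  assumes "p1 \<in> unit_disc" "p2 \<in> unit_disc"
  shows "rho_p p1 p2 < 1"
proof -
  define a b where "a = cmod p1" and "b = cmod p2"
  have ab: "0 \<le> a" "a < 1" "0 \<le> b" "b < 1"
    using assms unfolding unit_disc_def a_def b_def by auto
  have "cmod (of_real (1 - b\<^sup>2) * p1 + of_real (1 - a\<^sup>2) * p2)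
      \<le> cmod (of_real (1 - b\<^sup>2) * p1) + cmod (of_real (1 - a\<^sup>2) * p2)"
    by (rule norm_triangle_ineq)
  also have "\<dots> = (1 - b\<^sup>2) * a + (1 - a\<^sup>2) * b"
    unfolding norm_mult norm_of_real a_def[symmetric] b_def[symmetric]
    using ab by (simp add: abs_of_nonneg power_le_one)
  also have "\<dots> = (a + b) * (1 - a * b)"
    by (simp add: algebra_simps power2_eq_square)
  also have "\<dots> < (1 + a * b) * (1 - a * b)"
  proof (rule mult_strict_right_mono)
    show "a + b < 1 + a * b"
      using mult_pos_pos[of "1 - a" "1 - b"] ab by (simp add: algebra_simps)
    show "0 < 1 - a * b"
      using mult_left_le[of b a] ab by simp
  qed
  also have "\<dots> = 1 - (cmod (p1 * cnj p2))\<^sup>2"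
    by (simp add: norm_mult a_def b_def algebra_simps power2_eq_square)
  finally show ?thesis
    using norm_mult_cnj_less_one[OF assms]
    unfolding rho_p_def a_def[symmetric] b_def[symmetric]
    by (simp add: divide_less_eq_1 abs_square_less_1)
qed

lemma rho_p_pos:
  assumes "p1 \<in> unit_disc" "p2 \<in> unit_disc" "p1 \<noteq> - p2"
  shows "0 < rho_p p1 p2"
proof -
  define a b where "a = cmod p1" and "b = cmod p2"
  have ab: "0 \<le> a" "a < 1" "0 \<le> b" "b < 1"
    using assms unfolding unit_disc_def a_def b_def by auto
  have "of_real (1 - b\<^sup>2) * p1 + of_real (1 - a\<^sup>2) * p2 \<noteq> 0"
  proof
    assume sum0: "of_real (1 - b\<^sup>2) * p1 + of_real (1 - a\<^sup>2) * p2 = 0"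
    then have "cmod (of_real (1 - b\<^sup>2) * p1) = cmod (of_real (1 - a\<^sup>2) * p2)"
      by (simp add: add_eq_0_iff)
    then have "(1 - b\<^sup>2) * a = (1 - a\<^sup>2) * b"
      unfolding norm_mult norm_of_real a_def[symmetric] b_def[symmetric]
      using ab by (simp add: abs_of_nonneg power_le_one)
    then have "(a - b) * (1 + a * b) = 0"
      by (simp add: algebra_simps power2_eq_square)
    then have "a = b"
      using ab by (simp add: add_nonneg_eq_0_iff)
    then have "of_real (1 - a\<^sup>2) * (p1 + p2) = 0"
      using sum0 by (simp only: distrib_left add.commute)
    moreover have "1 - a\<^sup>2 \<noteq> 0"
      using ab by (simp add: abs_square_eq_1)
    ultimately have "p1 + p2 = 0"
      by (simp del: of_real_diff)
    then show False
      using assms(3) by (simp add: add_eq_0_iff)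
  qed
  moreover have "cmod (p1 * cnj p2) < 1"
    by (rule norm_mult_cnj_less_one[OF assms(1,2)])
  ultimately show ?thesis
    unfolding rho_p_def a_def[symmetric] b_def[symmetric] by (simp add: power_less_one_iff)
qed

lemma skew_weight_pos:
  assumes "p1 \<in> unit_disc" "p2 \<in> unit_disc" "p1 \<noteq> - p2"
  shows "0 < skew_weight p1 p2"
proof -
  have "cmod p1 < 1" "cmod p2 < 1"
    using assms unfolding unit_disc_def by auto
  moreover have "cmod (p1 * cnj p2) < 1"
    by (rule norm_mult_cnj_less_one[OF assms(1,2)])
  moreover have "p1 * cnj p2 \<noteq> 1"
    using calculation(3) by auto
  ultimately show ?thesis
    unfolding skew_weight_def
    using rho_p_pos[OF assms] rho_p_less_one[OF assms(1,2)]
    by (simp add: power_less_one_iff)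
qed

lemma sgn_power2_diff:
  fixes a b :: real
  assumes "0 \<le> a" "0 \<le> b"
  shows "sgn (a\<^sup>2 - b\<^sup>2) = sgn (a - b)"
proof (cases "a + b = 0")
  case False
  then have "0 < a + b"
    using assms by simp
  moreover have "a\<^sup>2 - b\<^sup>2 = (a - b) * (a + b)"
    by (simp add: algebra_simps power2_eq_square)
  ultimately show ?thesis
    by (simp add: sgn_mult)
qed (use assms in \<open>simp add: add_nonneg_eq_0_iff\<close>)

lemma sgn_skew:
  assumes "p1 \<in> unit_disc" "p2 \<in> unit_disc" "p1 \<noteq> - p2"
  shows "sgn (skew p1 p2) = sgn (Im (p1 * cnj p2) * (cmod p1 - cmod p2))"
  using skew_weight_pos[OF assms] sgn_power2_diff[of "cmod p1" "cmod p2"]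
  by (simp add: skew_eq_weight sgn_mult)

definition dens_coeff :: "complex \<Rightarrow> complex \<Rightarrow> real" where
  "dens_coeff p1 p2 =
     1 / (2 * pi) * (cmod (1 - p1 * cnj p2))\<^sup>2 / (1 - (cmod (p1 * cnj p2))\<^sup>2)
     * (1 - (cmod p1)\<^sup>2) * (1 - (cmod p2)\<^sup>2)"

definition dens_denom :: "complex \<Rightarrow> complex \<Rightarrow> real \<Rightarrow> real" where
  "dens_denom w1 w2 t = (cmod (cis t - w1))\<^sup>2 * (cmod (cis t - w2))\<^sup>2"

lemma dens_coeff_pos:
  assumes "p1 \<in> unit_disc" "p2 \<in> unit_disc"
  shows "0 < dens_coeff p1 p2"
proof -
  have "cmod p1 < 1" "cmod p2 < 1"
    using assms unfolding unit_disc_def by auto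
  moreover have "cmod (p1 * cnj p2) < 1"
    by (rule norm_mult_cnj_less_one[OF assms])
  moreover have "p1 * cnj p2 \<noteq> 1"
    using calculation(3) by auto
  ultimately show ?thesis
    unfolding dens_coeff_def by (simp add: abs_square_less_1)
qed

lemma norm_cis_add_minus: "cmod (cis (z + t) - p) = cmod (cis t - p * cis (- z))"
proof -
  have "cis z * cis (- z) = 1"
    by (simp add: cis_mult)
  then have "cis (z + t) - p = cis z * (cis t - p * cis (- z))"
    by (simp add: algebra_simps flip: cis_mult)
  then show ?thesis
    by (simp add: norm_mult)
qed

lemma dens_cis_add:
  "dens p1 p2 (cis (z + t)) = dens_coeff p1 p2 / dens_denom (p1 * cis (- z)) (p2 * cis (- z)) t"
  unfolding dens_def dens_coeff_def dens_denom_def norm_cis_add_minus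
  by (simp only: times_divide_eq_left times_divide_eq_right divide_divide_eq_left ac_simps)

lemma mult_cis_mult_cnj: "p1 * cis z * cnj (p2 * cis z) = p1 * cnj p2"
proof -
  have "cis z * cnj (cis z) = 1"
    by (simp add: cis_cnj cis_mult)
  then show ?thesis
    by (metis complex_cnj_mult mult.assoc mult.left_commute mult_1_right)
qed

lemma norm_cis_minus_square:
  "(cmod (cis t - w))\<^sup>2 = 1 + (cmod w)\<^sup>2 - 2 * (cos t * Re w + sin t * Im w)"
  unfolding cmod_power2 by (simp add: power2_diff algebra_simps)

lemma dens_denom_odd_part:
  "dens_denom w1 w2 t - dens_denom w1 w2 (- t)
     = - 4 * sin t * ((1 + (cmod w1)\<^sup>2) * Im w2 + (1 + (cmod w2)\<^sup>2) * Im w1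
                      - 2 * cos t * Im (w1 * w2))"
  unfolding dens_denom_def norm_cis_minus_square by (simp add: algebra_simps)

lemma dens_denom_even_iff:
  "(\<forall>t. dens_denom w1 w2 t = dens_denom w1 w2 (- t))
     \<longleftrightarrow> (1 + (cmod w1)\<^sup>2) * Im w2 + (1 + (cmod w2)\<^sup>2) * Im w1 = 0 \<and> Im (w1 * w2) = 0"
    (is "?even \<longleftrightarrow> ?A = 0 \<and> ?B = 0")
proof
  assume ?even
  then have odd0: "sin t * (?A - 2 * cos t * ?B) = 0" for t
    using dens_denom_odd_part[of w1 w2 t] by simp
  from odd0[of "pi / 2"] have "?A = 0"
    by simp
  moreover from odd0[of "pi / 3"] have "?A - ?B = 0"
    by (simp add: sin_60 cos_60)
  ultimately show "?A = 0 \<and> ?B = 0"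
    by simp
next
  assume "?A = 0 \<and> ?B = 0"
  then show ?even
    using dens_denom_odd_part[of w1 w2] by (simp add: diff_eq_eq)
qed

lemma symmetric_circ_dens_iff_even:
  assumes "p1 \<in> unit_disc" "p2 \<in> unit_disc"
  shows "symmetric_circ (dens p1 p2)
    \<longleftrightarrow> (\<exists>z. \<forall>t. dens_denom (p1 * cis (- z)) (p2 * cis (- z)) t
                  = dens_denom (p1 * cis (- z)) (p2 * cis (- z)) (- t))"
proof -
  have "dens p1 p2 (cis (z - t)) = dens_coeff p1 p2 / dens_denom (p1 * cis (- z)) (p2 * cis (- z)) (- t)"
    for z t
    using dens_cis_add[of p1 p2 z "- t"] by simp
  then show ?thesis
    unfolding symmetric_circ_def dens_cis_add
    using dens_coeff_pos[OF assms] by (simp add: divide_cancel_left)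
qed

lemma Im_mult_cnj_norm_diff_eq_0_if:
  assumes "(1 + (cmod w1)\<^sup>2) * Im w2 + (1 + (cmod w2)\<^sup>2) * Im w1 = 0" "Im (w1 * w2) = 0"
    and "cmod w1 < 1" "cmod w2 < 1"
  shows "Im (w1 * cnj w2) * ((cmod w1)\<^sup>2 - (cmod w2)\<^sup>2) = 0"
proof (cases "Im w1 = 0")
  case True
  moreover have "0 < 1 + (cmod w1)\<^sup>2"
    by (simp add: add_pos_nonneg)
  ultimately have "Im w2 = 0"
    using assms(1) by simp
  with \<open>Im w1 = 0\<close> show ?thesis
    by simp
next
  case False
  define u v where "u = (cmod w1)\<^sup>2" and "v = (cmod w2)\<^sup>2"
  have "u * (Im w2)\<^sup>2 = (Re w1 * Im w2)\<^sup>2 + (Im w1 * Im w2)\<^sup>2"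
    unfolding u_def cmod_power2 by (simp add: algebra_simps power2_eq_square)
  also have "Re w1 * Im w2 = - (Im w1 * Re w2)"
    using assms(2) by (simp add: eq_neg_iff_add_eq_0)
  finally have uv: "u * (Im w2)\<^sup>2 = v * (Im w1)\<^sup>2"
    unfolding v_def cmod_power2 by (simp add: algebra_simps power2_eq_square)
  have "((1 + u) * Im w2)\<^sup>2 = ((1 + v) * Im w1)\<^sup>2"
    using assms(1) unfolding u_def v_def by (simp add: eq_neg_iff_add_eq_0[symmetric])
  then have "u * (1 + v)\<^sup>2 * (Im w1)\<^sup>2 = (1 + u)\<^sup>2 * (u * (Im w2)\<^sup>2)"
    by (simp add: power_mult_distrib ac_simps)
  also have "\<dots> = (1 + u)\<^sup>2 * v * (Im w1)\<^sup>2"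
    unfolding uv by (simp only: ac_simps)
  finally have "(u * (1 + v)\<^sup>2 - (1 + u)\<^sup>2 * v) * (Im w1)\<^sup>2 = 0"
    by (simp add: algebra_simps)
  then have "u * (1 + v)\<^sup>2 - (1 + u)\<^sup>2 * v = 0"
    using False by simp
  then have "(u - v) * (1 - u * v) = 0"
    by (simp add: algebra_simps power2_eq_square)
  moreover have "u * v < 1"
    using assms(3,4) unfolding u_def v_def
    by (simp add: abs_square_less_1 mult_left_le[of _ "(cmod w1)\<^sup>2", THEN le_less_trans] less_imp_le)
  ultimately have "u = v"
    by simp
  then show ?thesis
    unfolding u_def v_def by simp
qed

lemma mult_cis_eq_polar: "p * cis a = of_real (cmod p) * cis (Arg p + a)"
proof -
  have "p * cis a = rcis (cmod p) (Arg p) * cis a"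
    by (simp only: rcis_cmod_Arg)
  then show ?thesis
    by (simp add: rcis_def cis_mult mult.assoc)
qed

lemma exists_rotation_real_or_conj:
  assumes "Im (p1 * cnj p2) * ((cmod p1)\<^sup>2 - (cmod p2)\<^sup>2) = 0"
  shows "\<exists>z. (Im (p1 * cis (- z)) = 0 \<and> Im (p2 * cis (- z)) = 0)
             \<or> p2 * cis (- z) = cnj (p1 * cis (- z))"
proof (cases "Im (p1 * cnj p2) = 0")
  case True
  show ?thesis
  proof (cases "p1 = 0")
    case True
    have "Im (p2 * cis (- Arg p2)) = 0"
      using mult_cis_eq_polar[of p2 "- Arg p2"] by simp
    with True show ?thesis
      by (intro exI[of _ "Arg p2"]) simp
  next
    case False
    have p1_real: "p1 * cis (- Arg p1) = of_real (cmod p1)"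
      using mult_cis_eq_polar[of p1 "- Arg p1"] by simp
    have "of_real (cmod p1) * cnj (p2 * cis (- Arg p1)) = p1 * cnj p2"
      using mult_cis_mult_cnj[of p1 "- Arg p1" p2] unfolding p1_real .
    from arg_cong[OF this, of Im] have "cmod p1 * Im (p2 * cis (- Arg p1)) = 0"
      using \<open>Im (p1 * cnj p2) = 0\<close> by (simp; linarith)
    with False p1_real show ?thesis
      by (intro exI[of _ "Arg p1"]) simp
  qed
next
  case False
  with assms have "(cmod p1)\<^sup>2 = (cmod p2)\<^sup>2"
    by simp
  then have same_norm: "cmod p2 = cmod p1"
    by (simp add: power2_eq_iff_nonneg)
  define z where "z = (Arg p1 + Arg p2) / 2"
  have "p1 * cis (- z) = of_real (cmod p1) * cis ((Arg p1 - Arg p2) / 2)"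
    using mult_cis_eq_polar[of p1 "- z"] unfolding z_def by (simp add: field_simps)
  moreover have "p2 * cis (- z) = of_real (cmod p1) * cis ((Arg p2 - Arg p1) / 2)"
    using mult_cis_eq_polar[of p2 "- z"] unfolding z_def same_norm by (simp add: field_simps)
  ultimately have "p2 * cis (- z) = cnj (p1 * cis (- z))"
    by (simp add: cis_cnj minus_divide_left)
  then show ?thesis
    by blast
qed

lemma symmetric_circ_dens_iff:
  assumes "p1 \<in> unit_disc" "p2 \<in> unit_disc"
  shows "symmetric_circ (dens p1 p2) \<longleftrightarrow> Im (p1 * cnj p2) * ((cmod p1)\<^sup>2 - (cmod p2)\<^sup>2) = 0"
proof
  assume "symmetric_circ (dens p1 p2)"
  then obtain z where "\<forall>t. dens_denom (p1 * cis (- z)) (p2 * cis (- z)) t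
                        = dens_denom (p1 * cis (- z)) (p2 * cis (- z)) (- t)"
    using symmetric_circ_dens_iff_even[OF assms] by blast
  moreover have "cmod (p1 * cis (- z)) < 1" "cmod (p2 * cis (- z)) < 1"
    using assms unfolding unit_disc_def by (simp_all add: norm_mult)
  ultimately have "Im (p1 * cis (- z) * cnj (p2 * cis (- z)))
      * ((cmod (p1 * cis (- z)))\<^sup>2 - (cmod (p2 * cis (- z)))\<^sup>2) = 0"
    unfolding dens_denom_even_iff by (intro Im_mult_cnj_norm_diff_eq_0_if) auto
  then show "Im (p1 * cnj p2) * ((cmod p1)\<^sup>2 - (cmod p2)\<^sup>2) = 0"
    unfolding mult_cis_mult_cnj by (simp add: norm_mult)
next
  assume "Im (p1 * cnj p2) * ((cmod p1)\<^sup>2 - (cmod p2)\<^sup>2) = 0"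
  then obtain z where "(Im (p1 * cis (- z)) = 0 \<and> Im (p2 * cis (- z)) = 0)
                       \<or> p2 * cis (- z) = cnj (p1 * cis (- z))"
    using exists_rotation_real_or_conj by blast
  moreover have "\<forall>t. dens_denom w1 w2 t = dens_denom w1 w2 (- t)"
    if "(Im w1 = 0 \<and> Im w2 = 0) \<or> w2 = cnj w1" for w1 w2
    using that unfolding dens_denom_even_iff by auto
  ultimately have "\<forall>t. dens_denom (p1 * cis (- z)) (p2 * cis (- z)) t
               = dens_denom (p1 * cis (- z)) (p2 * cis (- z)) (- t)"
    by blast
  then show "symmetric_circ (dens p1 p2)"
    using symmetric_circ_dens_iff_even[OF assms] by blast
qed

lemma one_minus_rho_p_le:
  assumes "p1 \<in> unit_disc" "p2 \<in> unit_disc"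
  shows "1 - rho_p p1 p2 \<le> (1 + cmod p2) / (1 - cmod p2) * (1 - cmod p1)"
proof -
  define a b where "a = cmod p1" and "b = cmod p2"
  have ab: "0 \<le> a" "a < 1" "0 \<le> b" "b < 1"
    using assms unfolding unit_disc_def a_def b_def by auto
  define N where "N = cmod (of_real (1 - b\<^sup>2) * p1 + of_real (1 - a\<^sup>2) * p2)"
  define D where "D = 1 - (a * b)\<^sup>2"
  have rho: "rho_p p1 p2 = N / D"
    unfolding rho_p_def N_def D_def a_def b_def by (simp add: norm_mult)
  have "(1 - b\<^sup>2) * a - (1 - a\<^sup>2) * b
      = cmod (of_real (1 - b\<^sup>2) * p1) - cmod (of_real (1 - a\<^sup>2) * p2)"
    unfolding norm_mult norm_of_real a_def[symmetric] b_def[symmetric]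
    using ab by (simp add: abs_of_nonneg power_le_one)
  also have "\<dots> \<le> N"
    unfolding N_def by (rule norm_diff_ineq)
  finally have N_ge: "(1 - b\<^sup>2) * a - (1 - a\<^sup>2) * b \<le> N" .
  have "1 + a * b\<^sup>2 + b * (1 + a) \<le> (1 + b)\<^sup>2"
    using mult_left_le[of a "b\<^sup>2"] mult_left_le[of a b] ab
    by (simp add: power2_eq_square algebra_simps)
  then have "(1 - a) * (1 + a * b\<^sup>2 + b * (1 + a)) \<le> (1 - a) * (1 + b)\<^sup>2"
    using ab by (intro mult_left_mono) auto
  moreover have "D - ((1 - b\<^sup>2) * a - (1 - a\<^sup>2) * b) = (1 - a) * (1 + a * b\<^sup>2 + b * (1 + a))"
    unfolding D_def by (simp add: algebra_simps power2_eq_square)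
  ultimately have DN: "D - N \<le> (1 - a) * (1 + b)\<^sup>2"
    using N_ge by linarith
  have b2: "0 < 1 - b\<^sup>2"
    using ab by (simp add: abs_square_less_1)
  have D_ge: "1 - b\<^sup>2 \<le> D"
    unfolding D_def using ab mult_left_le[of "a\<^sup>2" "b\<^sup>2"]
    by (simp add: power_mult_distrib power_le_one mult.commute)
  have "1 - rho_p p1 p2 = (D - N) / D"
    unfolding rho using b2 D_ge by (simp add: field_simps)
  also have "\<dots> \<le> (1 - a) * (1 + b)\<^sup>2 / D"
    using DN b2 D_ge by (intro divide_right_mono) auto
  also have "\<dots> \<le> (1 - a) * (1 + b)\<^sup>2 / (1 - b\<^sup>2)"
    using b2 D_ge ab by (intro divide_left_mono) auto
  also have "\<dots> = (1 + b) / (1 - b) * (1 - a)"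
  proof -
    have "1 - b\<^sup>2 = (1 - b) * (1 + b)"
      by (simp add: algebra_simps power2_eq_square)
    then show ?thesis
      using ab by (simp add: power2_eq_square)
  qed
  finally show ?thesis
    unfolding a_def b_def .
qed

lemma skew_weight_lower_bound:
  assumes "p1 \<in> unit_disc" "p2 \<in> unit_disc" "p1 \<noteq> - p2"
  defines "C \<equiv> (1 + cmod p2) / (1 - cmod p2)"
  shows "(1 - cmod p2)\<^sup>2 * (1 - (cmod p2)\<^sup>2) * C powr (-3/2) * (1 - cmod p1) powr (-1/2)
           \<le> skew_weight p1 p2"
proof -
  define a b where "a = cmod p1" and "b = cmod p2"
  have ab: "0 \<le> a" "a < 1" "0 \<le> b" "b < 1"
    using assms unfolding unit_disc_def a_def b_def by auto
  have C: "0 < C"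
    unfolding C_def b_def[symmetric] using ab by simp
  have w: "cmod (p1 * cnj p2) = a * b"
    unfolding a_def b_def by (simp add: norm_mult)
  have D: "0 < 1 - (a * b)\<^sup>2" "1 - (a * b)\<^sup>2 \<le> 1"
    using norm_mult_cnj_less_one[OF assms(1,2)] ab unfolding w
    by (simp_all add: abs_square_less_1)
  have rho: "0 < rho_p p1 p2" "rho_p p1 p2 < 1"
    using rho_p_pos[OF assms(1-3)] rho_p_less_one[OF assms(1,2)] .
  have "1 - b \<le> 1 - a * b"
    using ab mult_left_le[of a b] by (simp add: mult.commute)
  also have "\<dots> \<le> cmod (1 - p1 * cnj p2)"
    using norm_triangle_ineq2[of 1 "p1 * cnj p2"] w by simp
  finally have "(1 - b)\<^sup>2 \<le> (cmod (1 - p1 * cnj p2))\<^sup>2"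
    using ab by (intro power_mono) auto
  also have "\<dots> \<le> (cmod (1 - p1 * cnj p2))\<^sup>2 / (1 - (a * b)\<^sup>2) ^ 3"
    using D by (simp add: le_divide_eq power_le_one mult_left_le)
  finally have F1: "(1 - b)\<^sup>2 \<le> (cmod (1 - p1 * cnj p2))\<^sup>2 / (1 - (a * b)\<^sup>2) ^ 3" .
  have F2: "1 \<le> 1 / (rho_p p1 p2)\<^sup>2"
    using rho by (simp add: power_le_one)
  have "(C * (1 - a)) powr (-3/2) \<le> (1 - rho_p p1 p2) powr (-3/2)"
    using one_minus_rho_p_le[OF assms(1,2)] rho
    unfolding C_def a_def b_def by (intro powr_mono2') auto
  moreover have "1 - a \<le> 1 - a\<^sup>2"
    using ab by (simp add: power2_eq_square mult_left_le)
  ultimately have "(1 - a) * (C * (1 - a)) powr (-3/2) \<le> (1 - a\<^sup>2) * (1 - rho_p p1 p2) powr (-3/2)"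
    using ab by (intro mult_mono) auto
  moreover have "(1 - a) * (C * (1 - a)) powr (-3/2) = C powr (-3/2) * (1 - a) powr (-1/2)"
    using ab C by (simp add: powr_mult powr_add[symmetric] powr_mult_base)
  ultimately have F3: "C powr (-3/2) * (1 - a) powr (-1/2) \<le> (1 - a\<^sup>2) * (1 - rho_p p1 p2) powr (-3/2)"
    by simp
  have "(1 - b)\<^sup>2 * 1 * (C powr (-3/2) * (1 - a) powr (-1/2)) * (1 - b\<^sup>2)
      \<le> (cmod (1 - p1 * cnj p2))\<^sup>2 / (1 - (a * b)\<^sup>2) ^ 3 * (1 / (rho_p p1 p2)\<^sup>2)
         * ((1 - a\<^sup>2) * (1 - rho_p p1 p2) powr (-3/2)) * (1 - b\<^sup>2)"
  proof (rule mult_mono[OF mult_mono[OF mult_mono[OF F1 F2] F3] order_refl])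
    have "0 < (1 - (a * b)\<^sup>2) ^ 3" "0 \<le> 1 - a\<^sup>2" "0 \<le> 1 - b\<^sup>2"
      using D ab by (simp_all add: abs_square_le_1)
    then show "0 \<le> (cmod (1 - p1 * cnj p2))\<^sup>2 / (1 - (a * b)\<^sup>2) ^ 3 * (1 / (rho_p p1 p2)\<^sup>2)"
      and "0 \<le> (cmod (1 - p1 * cnj p2))\<^sup>2 / (1 - (a * b)\<^sup>2) ^ 3 * (1 / (rho_p p1 p2)\<^sup>2)
                * ((1 - a\<^sup>2) * (1 - rho_p p1 p2) powr (-3/2))"
      and "0 \<le> (cmod (1 - p1 * cnj p2))\<^sup>2 / (1 - (a * b)\<^sup>2) ^ 3"
      and "0 \<le> 1 - b\<^sup>2"
      by simp_all
  qed simp_all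
  then show ?thesis
    unfolding skew_weight_def w a_def[symmetric] b_def[symmetric] by (simp only: ac_simps mult_1_right)
qed

lemma filterlim_one_minus_powr_at_left:
  "filterlim (\<lambda>r::real. (1 - r) powr (-1/2)) at_top (at_left 1)"
  unfolding filterlim_at_top
proof
  fix Z :: real
  define m where "m = max Z 1"
  have m: "0 < m" "Z \<le> m"
    unfolding m_def by auto
  have "eventually (\<lambda>r. r \<in> {1 - m powr (-2)<..<1}) (at_left (1::real))"
    by (rule eventually_at_left_real) (use m in simp)
  then show "eventually (\<lambda>r. Z \<le> (1 - r) powr (-1/2)) (at_left 1)"
  proof (rule eventually_mono)
    fix r
    assume r: "r \<in> {1 - m powr (-2)<..<1}"
    have "m = (m powr (-2)) powr (-1/2)"
      using m by (simp add: powr_powr)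
    also have "\<dots> \<le> (1 - r) powr (-1/2)"
      using r by (intro powr_mono2') auto
    finally show "Z \<le> (1 - r) powr (-1/2)"
      using m by simp
  qed
qed

lemma skew_weight_tendsto_at_top:
  assumes "p2 \<in> unit_disc"
  shows "filterlim (\<lambda>r. skew_weight (of_real r * cis \<mu>) p2) at_top (at_left 1)"
proof -
  define b where "b = cmod p2"
  define M where "M = (1 - b)\<^sup>2 * (1 - b\<^sup>2) * ((1 + b) / (1 - b)) powr (-3/2)"
  have b: "0 \<le> b" "b < 1"
    using assms unfolding unit_disc_def b_def by auto
  then have "0 < M"
    unfolding M_def by (simp add: abs_square_less_1)
  then have "filterlim (\<lambda>r. M * (1 - r) powr (-1/2)) at_top (at_left 1)"
    by (rule filterlim_tendsto_pos_mult_at_top[OF tendsto_const _ filterlim_one_minus_powr_at_left])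
  moreover have "eventually (\<lambda>r. r \<in> {b<..<1}) (at_left (1::real))"
    by (rule eventually_at_left_real) (use b in simp)
  then have "eventually (\<lambda>r. M * (1 - r) powr (-1/2) \<le> skew_weight (of_real r * cis \<mu>) p2)
               (at_left 1)"
  proof (rule eventually_mono)
    fix r
    assume r: "r \<in> {b<..<1}"
    then have norm_p1: "cmod (of_real r * cis \<mu>) = r"
      using b by (simp add: norm_mult)
    then have "of_real r * cis \<mu> \<in> unit_disc" "of_real r * cis \<mu> \<noteq> - p2"
      using r unfolding unit_disc_def b_def by auto
    from skew_weight_lower_bound[OF this(1) assms this(2)]
    show "M * (1 - r) powr (-1/2) \<le> skew_weight (of_real r * cis \<mu>) p2"
      unfolding norm_p1 M_def b_def[symmetric] .
  qed
  ultimately show ?thesis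
    by (rule filterlim_at_top_mono)
qed

lemma skew_polar:
  "skew (of_real r1 * cis \<mu>1) (of_real r2 * cis \<mu>2)
     = r1 * r2 * sin (\<mu>1 - \<mu>2) * (r1\<^sup>2 - r2\<^sup>2) * skew_weight (of_real r1 * cis \<mu>1) (of_real r2 * cis \<mu>2)"
  unfolding skew_eq_weight by (simp add: norm_mult cis_cnj sin_diff algebra_simps)

lemma skew_tendsto_at_top:
  assumes "0 < r2" "r2 < 1" "0 < sin (\<mu>1 - \<mu>2)"
  shows "filterlim (\<lambda>r1. skew (of_real r1 * cis \<mu>1) (of_real r2 * cis \<mu>2)) at_top (at_left 1)"
  unfolding skew_polar
proof (rule filterlim_tendsto_pos_mult_at_top[OF _ _ skew_weight_tendsto_at_top])
  show "((\<lambda>r1. r1 * r2 * sin (\<mu>1 - \<mu>2) * (r1\<^sup>2 - r2\<^sup>2))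
           \<longlongrightarrow> r2 * sin (\<mu>1 - \<mu>2) * (1 - r2\<^sup>2)) (at_left 1)"
    by (intro tendsto_eq_intros) auto
  show "0 < r2 * sin (\<mu>1 - \<mu>2) * (1 - r2\<^sup>2)"
    using assms by (simp add: abs_square_less_1)
  show "of_real r2 * cis \<mu>2 \<in> unit_disc"
    using assms unfolding unit_disc_def by (simp add: norm_mult)
qed

lemma skew_tendsto_at_bot:
  assumes "0 < r2" "r2 < 1" "sin (\<mu>1 - \<mu>2) < 0"
  shows "filterlim (\<lambda>r1. skew (of_real r1 * cis \<mu>1) (of_real r2 * cis \<mu>2)) at_bot (at_left 1)"
  unfolding skew_polar
proof (rule filterlim_tendsto_neg_mult_at_bot[OF _ _ skew_weight_tendsto_at_top])
  show "((\<lambda>r1. r1 * r2 * sin (\<mu>1 - \<mu>2) * (r1\<^sup>2 - r2\<^sup>2))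
           \<longlongrightarrow> r2 * sin (\<mu>1 - \<mu>2) * (1 - r2\<^sup>2)) (at_left 1)"
    by (intro tendsto_eq_intros) auto
  show "r2 * sin (\<mu>1 - \<mu>2) * (1 - r2\<^sup>2) < 0"
    using assms by (simp add: abs_square_less_1 mult_pos_neg mult_neg_pos)
  show "of_real r2 * cis \<mu>2 \<in> unit_disc"
    using assms unfolding unit_disc_def by (simp add: norm_mult)
qed

lemma skew_eq_0_iff_symmetric:
  assumes "p1 \<in> unit_disc" "p2 \<in> unit_disc" "p1 \<noteq> - p2"
  shows "skew p1 p2 = 0 \<longleftrightarrow> symmetric_circ (dens p1 p2)"
  using skew_weight_pos[OF assms] by (simp add: skew_eq_weight symmetric_circ_dens_iff[OF assms(1,2)])



theorem theorem5:
  shows "(\<forall>p1 p2. p1 \<in> unit_disc \<and> p2 \<in> unit_disc \<and> p1 \<noteq> - p2 \<longrightarrow>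
            (skew p1 p2 = 0 \<longleftrightarrow> symmetric_circ (dens p1 p2)))
    \<and> (\<forall>p1 p2. p1 \<in> unit_disc \<and> p2 \<in> unit_disc \<and> p1 \<noteq> - p2 \<longrightarrow>
            (skew p1 p2 > 0 \<longleftrightarrow> Im (p1 * cnj p2) * (cmod p1 - cmod p2) > 0)
          \<and> (skew p1 p2 < 0 \<longleftrightarrow> Im (p1 * cnj p2) * (cmod p1 - cmod p2) < 0))
    \<and> (\<forall>p1 p2. p1 \<in> unit_disc \<and> p2 \<in> unit_disc \<and> p1 \<noteq> - p2 \<and> p1 \<noteq> 0 \<and> p2 \<noteq> 0 \<longrightarrow>
            skew p1 p2 = - skew p1 (cnj p2 * p1\<^sup>2 / complex_of_real ((cmod p1)\<^sup>2))
          \<and> skew p1 p2 = - skew (cnj p1 * p2\<^sup>2 / complex_of_real ((cmod p2)\<^sup>2)) p2)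
    \<and> (\<forall>p1 p2. p1 \<in> unit_disc \<and> p2 \<in> unit_disc \<and> p1 \<noteq> - p2 \<longrightarrow>
            skew p2 p1 = skew p1 p2)
    \<and> (\<forall>p1 p2. p1 \<in> unit_disc \<and> p2 \<in> unit_disc \<and> p1 \<noteq> - p2 \<longrightarrow>
            skew (cnj p1) (cnj p2) = - skew p1 p2)
    \<and> (\<forall>p1 p2 \<alpha>. p1 \<in> unit_disc \<and> p2 \<in> unit_disc \<and> p1 \<noteq> - p2 \<and> cmod \<alpha> = 1 \<longrightarrow>
            skew (\<alpha> * p1) (\<alpha> * p2) = skew p1 p2)
    \<and> (\<forall>r2 \<mu>1 \<mu>2. 0 < r2 \<and> r2 < 1 \<longrightarrow>
            (sin (\<mu>1 - \<mu>2) > 0 \<longrightarrow>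
               filterlim (\<lambda>r1. skew (complex_of_real r1 * cis \<mu>1) (complex_of_real r2 * cis \<mu>2))
                 at_top (at_left 1))
          \<and> (sin (\<mu>1 - \<mu>2) < 0 \<longrightarrow>
               filterlim (\<lambda>r1. skew (complex_of_real r1 * cis \<mu>1) (complex_of_real r2 * cis \<mu>2))
                 at_bot (at_left 1)))"
proof (intro conjI allI impI; (elim conjE)?)
  fix p1 p2 :: complex
  assume disc: "p1 \<in> unit_disc" "p2 \<in> unit_disc" "p1 \<noteq> - p2"
  show "skew p1 p2 = 0 \<longleftrightarrow> symmetric_circ (dens p1 p2)"
    using skew_eq_0_iff_symmetric[OF disc] .
  show "0 < skew p1 p2 \<longleftrightarrow> 0 < Im (p1 * cnj p2) * (cmod p1 - cmod p2)"
    by (metis sgn_greater sgn_skew[OF disc])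
  show "skew p1 p2 < 0 \<longleftrightarrow> Im (p1 * cnj p2) * (cmod p1 - cmod p2) < 0"
    by (metis sgn_less sgn_skew[OF disc])
  show "skew p2 p1 = skew p1 p2"
    by (rule skew_commute)
  show "skew (cnj p1) (cnj p2) = - skew p1 p2"
    by (rule skew_cnj)
next
  fix p1 p2 :: complex
  assume "p1 \<noteq> 0" "p2 \<noteq> 0"
  then show "skew p1 p2 = - skew p1 (cnj p2 * p1\<^sup>2 / of_real ((cmod p1)\<^sup>2))"
    and "skew p1 p2 = - skew (cnj p1 * p2\<^sup>2 / of_real ((cmod p2)\<^sup>2)) p2"
    using skew_reflect[of p1 p2] skew_reflect[of p2 p1] skew_commute by simp_all
next
  fix p1 p2 \<alpha> :: complex
  assume "cmod \<alpha> = 1"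
  then show "skew (\<alpha> * p1) (\<alpha> * p2) = skew p1 p2"
    by (rule skew_rotate)
qed (use skew_tendsto_at_top skew_tendsto_at_bot in auto)

end
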